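(* Let the setting described in the context hold, and assume conditions (A)(i)–(iii) and (P), with $L_F^2\eta_k<1-\eta_F$ for all $k\ge1$. Assume $\lim_{\delta\to0^+}\lambda_k^\delta=\lambda_k^0$ for each $k$. Assume the stopping index $k(\delta)$ satisfies $\lim_{\delta\to0^+}k(\delta)=\infty$ and $\lim_{\delta\to0^+}\delta^2\sum_{i=1}^{k(\delta)}\eta_i=0$. Take the radius \[ \rho^2=e^{n\sum_{j=1}^{k(\delta)}c_j^\delta}\Big(\|x_1-x^\dagger\|^2+(C_{max}+\delta)^2+n\delta^2\sum_{j=1}^{k(\delta)}d_j\Big)-(C_{max}+\delta)^2, \] where \[ c_j^\delta=2\eta_j\lambda_j^\delta\max(1,L_G^2)\big(\tfrac32+2\eta_j\lambda_j^\delta L_G^2\big),\qquad d_j=\frac{(1+\eta_F)^2}{2(1-L_F^2\eta_j-\eta_F)}\eta_j . \] Then for every $k\le k(\delta)$, the data-driven SGD iterate $x_k^\delta$ lies in $\mathcal{B}_\rho(x^\dagger)$.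
   Context: Setting. $X,Y$ are real Hilbert spaces and $n\ge1$. $Y^n$ is the product Hilbert space. $F_i:\mathcal{D}(F_i)\subset X\to Y$ and $G_i:X\to Y$ for $i=1,\dots,n$, with $F(x)=n^{-1/2}(F_i(x))_i$ and $G(x)=n^{-1/2}(G_i(x))_i$. Data. The exact data are $y^\dagger=n^{-1/2}(y_i^\dagger)_i$ and the noisy data $y^\delta=n^{-1/2}(y_i^\delta)_i$, with $\|y^\delta-y^\dagger\|\le\delta$. Reference solution. $x_1$ is a deterministic initial guess, and $x^\dagger$ is the solution of $F(x)=y^\dagger$ of minimal distance to $x_1$. Algorithm. $x_1^\delta=x_1$, and \[ x_{k+1}^\delta=x_k^\delta-\eta_k\big(F_{i_k}'(x_k^\delta)^*(F_{i_k}(x_k^\delta)-y^\delta_{i_k})+\lambda_k^\delta G_{i_k}'(x_k^\delta)^*(G_{i_k}(x_k^\delta)-y^\delta_{i_k})\big), \] with $i_k$ drawn uniformly and independently from $\{1,\dots,n\}$, $\eta_k>0$ and $\lambda_k^\delta>0$. (A) On the closed ball $\mathcal{B}_\rho(x^\dagger)\subset\bigcap_i\mathcal{D}(F_i)$ the following hold. (i) $F_i$ and $G_i$ have continuous Fréchet derivatives bounded by $L_F$ and $L_G$. (ii) There is $\eta_F\in[0,1)$ with $\|F_i(x)-F_i(\tilde x)-F_i'(\tilde x)(x-\tilde x)\|\le\eta_F\|F_i(x)-F_i(\tilde x)\|$. (iii) $C_{min}\le\|G(x^* )-y^\dagger\|\le C_{max}$ for every solution $x^*\in\mathcal{B}_\rho(x^\dagger)$,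 with $0<C_{min}\le C_{max}$. (P) $L_F^2\eta_k<1$, $\sum_k\eta_k=\infty$, and $\sum_k\eta_k\lambda_k^\delta<\infty$. *)

theory Defs
  imports "HOL-Analysis.Analysis"
begin

text \<open>Norm in the product Hilbert space Y^n of the scaled vector n^(-1/2) (v_i)_{i=1..n}.\<close>
definition stack_norm :: "nat \<Rightarrow> (nat \<Rightarrow> 'b::real_normed_vector) \<Rightarrow> real" where
  "stack_norm n v = sqrt ((1 / real n) * (\<Sum>i\<in>{1..n}. (norm (v i))^2))"

text \<open>x solves F(x) = y-dagger (componentwise; the common scaling n^(-1/2) cancels),
  with x in the common domain.\<close>
definition is_solution :: "nat \<Rightarrow> (nat \<Rightarrow> 'a set) \<Rightarrow> (nat \<Rightarrow> 'a \<Rightarrow> 'b) \<Rightarrow> (nat \<Rightarrow> 'b) \<Rightarrow> 'a \<Rightarrow> bool" where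
  "is_solution n D F ydag x \<longleftrightarrow> (\<forall>i\<in>{1..n}. x \<in> D i \<and> F i x = ydag i)"

definition is_min_dist_solution ::
  "nat \<Rightarrow> (nat \<Rightarrow> 'a::real_normed_vector set) \<Rightarrow> (nat \<Rightarrow> 'a \<Rightarrow> 'b) \<Rightarrow> (nat \<Rightarrow> 'b) \<Rightarrow> 'a \<Rightarrow> 'a \<Rightarrow> bool" where
  "is_min_dist_solution n D F ydag x1 xd \<longleftrightarrow>
     is_solution n D F ydag xd \<and> (\<forall>x. is_solution n D F ydag x \<longrightarrow> norm (xd - x1) \<le> norm (x - x1))"

text \<open>Data-driven SGD iterates along a fixed index sequence idx (idx k = i_k).
  sgd ... k is the iterate x_k for k \<ge> 1 (the value at 0 is set to x_1 as a dummy).\<close>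
fun sgd :: "(nat \<Rightarrow> 'a::real_inner \<Rightarrow> 'b::real_inner) \<Rightarrow> (nat \<Rightarrow> 'a \<Rightarrow> 'a \<Rightarrow>\<^sub>L 'b) \<Rightarrow>
            (nat \<Rightarrow> 'a \<Rightarrow> 'b) \<Rightarrow> (nat \<Rightarrow> 'a \<Rightarrow> 'a \<Rightarrow>\<^sub>L 'b) \<Rightarrow>
            (nat \<Rightarrow> 'b) \<Rightarrow> (nat \<Rightarrow> real) \<Rightarrow> (nat \<Rightarrow> real) \<Rightarrow> (nat \<Rightarrow> nat) \<Rightarrow> 'a \<Rightarrow> nat \<Rightarrow> 'a" where
  "sgd F F' G G' yd eta lam idx x1 0 = x1"
| "sgd F F' G G' yd eta lam idx x1 (Suc k) =
     (if k = 0 then x1 else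
      (let x = sgd F F' G G' yd eta lam idx x1 k; i = idx k in
        x - eta k *\<^sub>R (adjoint (blinfun_apply (F' i x)) (F i x - yd i)
                       + lam k *\<^sub>R adjoint (blinfun_apply (G' i x)) (G i x - yd i))))"

end

theory Submission
  imports Defs
begin

text \<open>
  Along the iteration, the Lyapunov quantity |x_k - x\<dagger>|^2 + (C_max + \<delta>)^2 grows in one
  step by at most the factor 1 + n c_k plus the additive noise term n \<delta>^2 d_k, as long as the
  current iterate lies in the ball where (A) holds: by the tangential cone condition the
  F-part of the step is a descent direction up to the data noise (completing the square
  produces d_k), while the G-part is controlled through the Lipschitz bound on G and (A)(iii).
  A discrete Gronwall argument bounds the Lyapunov quantity by \<rho>^2 + (C_max + \<delta>)^2 up to
  k(\<delta>), which keeps every iterate in the ball.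

  Isabelle's adjoint is a choice operator whose defining property the library only
  establishes on Euclidean spaces; on Hilbert spaces it follows from the Riesz representation
  theorem, proved here by minimising |x|^2/2 - \<phi> x.
\<close>

lemma linear_coeff_zero_if_quadratic_nonneg:
  fixes a b :: real
  assumes "0 \<le> b" and nonneg: "\<And>t. 0 \<le> t * a + t\<^sup>2 * b"
  shows "a = 0"
proof -
  have "0 \<le> (- a / (b + 1)) * a + (- a / (b + 1))\<^sup>2 * b" by (rule nonneg)
  also have "\<dots> = - (a\<^sup>2 / (b + 1)\<^sup>2)"
    using assms(1) by (simp add: power2_eq_square divide_simps) (simp add: algebra_simps)
  finally have "a\<^sup>2 / (b + 1)\<^sup>2 \<le> 0" by simp
  then show "a = 0"
    using assms(1) by (simp add: divide_le_0_iff)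
qed

lemma Cauchy_if_dist_le_tendsto_zero:
  fixes X :: "nat \<Rightarrow> 'a::metric_space"
  assumes dist: "\<And>k l. dist (X k) (X l) \<le> r k + r l" and r: "r \<longlonglongrightarrow> 0"
  shows "Cauchy X"
proof (rule metric_CauchyI)
  fix e :: real assume "0 < e"
  then obtain M where "\<forall>k\<ge>M. \<bar>r k\<bar> < e / 2"
    using r by (metis LIMSEQ_iff half_gt_zero real_norm_def diff_zero)
  then have "\<forall>k\<ge>M. \<forall>l\<ge>M. dist (X k) (X l) < e"
    using dist by (smt (verit) field_sum_of_halves)
  then show "\<exists>M. \<forall>k\<ge>M. \<forall>l\<ge>M. dist (X k) (X l) < e" ..
qed

lemma dist_almost_minimizers_le:
  fixes \<phi> :: "'a::real_inner \<Rightarrow> real"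
  assumes "linear \<phi>" and min: "\<And>w. m \<le> (norm w)\<^sup>2 / 2 - \<phi> w"
    and x: "(norm x)\<^sup>2 / 2 - \<phi> x \<le> m + \<epsilon>" and y: "(norm y)\<^sup>2 / 2 - \<phi> y \<le> m + \<epsilon>'"
  shows "dist x y \<le> 2 * sqrt \<epsilon> + 2 * sqrt \<epsilon>'"
proof -
  interpret linear \<phi> by fact
  define J where "J w = (norm w)\<^sup>2 / 2 - \<phi> w" for w
  have "(dist x y)\<^sup>2 = 4 * (J x + J y - 2 * J ((1/2) *\<^sub>R (x + y)))"
    unfolding J_def dist_norm power2_norm_eq_inner
    by (simp add: inner_simps scaleR add diff algebra_simps inner_commute)
  also have "\<dots> \<le> 4 * (\<epsilon> + \<epsilon>')"
    using x y min[of "(1/2) *\<^sub>R (x + y)"] unfolding J_def by simp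
  finally have "dist x y \<le> 2 * sqrt (\<epsilon> + \<epsilon>')"
    by (metis real_le_rsqrt real_sqrt_four real_sqrt_mult)
  also have "\<dots> \<le> 2 * sqrt \<epsilon> + 2 * sqrt \<epsilon>'"
    using sqrt_add_le_add_sqrt[of \<epsilon> \<epsilon>'] x y min[of x] min[of y] by simp
  finally show ?thesis .
qed

lemma ex_minimizer_half_norm_sq_minus_bounded_linear:
  fixes \<phi> :: "'a::{real_inner,complete_space} \<Rightarrow> real"
  assumes "bounded_linear \<phi>"
  shows "\<exists>z. \<forall>y. (norm z)\<^sup>2 / 2 - \<phi> z \<le> (norm y)\<^sup>2 / 2 - \<phi> y"
proof -
  interpret bounded_linear \<phi> by fact
  define J where "J x = (norm x)\<^sup>2 / 2 - \<phi> x" for x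
  obtain K where K: "\<And>x. norm (\<phi> x) \<le> norm x * K" using bounded by blast
  have "- K\<^sup>2 / 2 \<le> J x" for x
    using K[of x] sum_squares_ge_zero[of "norm x - K" 0]
    unfolding J_def by (simp add: power2_eq_square algebra_simps)
  then have bdd: "bdd_below (range J)" by (intro bdd_belowI2)
  define m where "m = Inf (range J)"
  have m_le: "m \<le> J x" for x unfolding m_def by (rule cInf_lower[OF _ bdd]) simp
  have "\<exists>x. J x < m + inverse (Suc k)" for k
    using cInf_less_iff[OF _ bdd, of "m + inverse (Suc k)"] unfolding m_def by auto
  then obtain xs where xs: "\<And>k. J (xs k) < m + inverse (Suc k)" by metis
  have "dist (xs k) (xs l) \<le> 2 * sqrt (inverse (Suc k)) + 2 * sqrt (inverse (Suc l))" for k l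
    using m_le xs[of k] xs[of l] unfolding J_def
    by (intro dist_almost_minimizers_le[OF linear]) (auto intro: less_imp_le)
  moreover have "(\<lambda>k. 2 * sqrt (inverse (real (Suc k)))) \<longlonglongrightarrow> 0"
    using tendsto_real_sqrt[OF LIMSEQ_inverse_real_of_nat] tendsto_mult_right_zero by fastforce
  ultimately have "Cauchy xs" by (rule Cauchy_if_dist_le_tendsto_zero)
  then obtain z where "xs \<longlonglongrightarrow> z" using Cauchy_convergent_iff convergent_def by blast
  then have J_lim: "(\<lambda>k. J (xs k)) \<longlonglongrightarrow> J z"
    unfolding J_def by (intro tendsto_intros tendsto) auto
  have bound_lim: "(\<lambda>k. m + inverse (real (Suc k))) \<longlonglongrightarrow> m"
    using tendsto_add[OF tendsto_const LIMSEQ_inverse_real_of_nat] by simp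
  have "\<forall>\<^sub>F k in sequentially. J (xs k) \<le> m + inverse (real (Suc k))"
    using xs by (simp add: less_imp_le)
  from tendsto_le[OF sequentially_bot bound_lim J_lim this] have "J z \<le> m" .
  then show ?thesis using m_le unfolding J_def by (meson order_trans)
qed

theorem riesz_representation:
  fixes \<phi> :: "'a::{real_inner,complete_space} \<Rightarrow> real"
  assumes "bounded_linear \<phi>"
  shows "\<exists>z. \<forall>x. \<phi> x = z \<bullet> x"
proof -
  interpret bounded_linear \<phi> by fact
  obtain z where z: "\<And>y. (norm z)\<^sup>2 / 2 - \<phi> z \<le> (norm y)\<^sup>2 / 2 - \<phi> y"
    using ex_minimizer_half_norm_sq_minus_bounded_linear[OF assms] by blast
  have "\<phi> h = z \<bullet> h" for h
  proof -
    have "0 \<le> t * (z \<bullet> h - \<phi> h) + t\<^sup>2 * ((norm h)\<^sup>2 / 2)" for t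
      using z[of "z + t *\<^sub>R h"] unfolding power2_norm_eq_inner
      by (simp add: inner_simps add scaleR algebra_simps inner_commute power2_eq_square)
    from linear_coeff_zero_if_quadratic_nonneg[OF _ this] show ?thesis by simp
  qed
  then show ?thesis by blast
qed

lemma adjoint_works_hilbert:
  fixes f :: "'a::{real_inner,complete_space} \<Rightarrow> 'b::real_inner"
  assumes "bounded_linear f"
  shows "x \<bullet> adjoint f y = f x \<bullet> y"
proof -
  have "\<forall>y. \<exists>w. \<forall>x. f x \<bullet> y = x \<bullet> w"
  proof
    fix y
    obtain w where "\<And>x. f x \<bullet> y = w \<bullet> x"
      using riesz_representation[OF bounded_linear_compose[OF bounded_linear_inner_left assms]]
      by blast
    then show "\<exists>w. \<forall>x. f x \<bullet> y = x \<bullet> w" by (metis inner_commute)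
  qed
  then show ?thesis
    unfolding adjoint_def choice_iff
    by (intro someI2_ex[where Q="\<lambda>f'. x \<bullet> f' y = f x \<bullet> y"]) auto
qed

lemma norm_adjoint_blinfun_le:
  fixes A :: "'a::{real_inner,complete_space} \<Rightarrow>\<^sub>L 'b::real_inner"
  shows "norm (adjoint (blinfun_apply A) y) \<le> norm A * norm y"
proof -
  let ?z = "adjoint (blinfun_apply A) y"
  have "norm ?z * norm ?z = A ?z \<bullet> y"
    using adjoint_works_hilbert[OF blinfun.bounded_linear_right, of ?z A y]
    by (simp add: power2_norm_eq_inner[symmetric] power2_eq_square)
  also have "\<dots> \<le> norm (A ?z) * norm y" by (rule norm_cauchy_schwarz)
  also have "\<dots> \<le> norm A * norm ?z * norm y" by (simp add: mult_right_mono norm_blinfun)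
  finally have "norm ?z * norm ?z \<le> (norm A * norm y) * norm ?z"
    by (simp add: algebra_simps)
  then show ?thesis by (cases "norm ?z = 0") auto
qed

definition growth_coeff :: "real \<Rightarrow> real \<Rightarrow> real \<Rightarrow> real" where
  "growth_coeff LG \<eta> lam = 2 * \<eta> * lam * max 1 (LG\<^sup>2) * (3/2 + 2 * \<eta> * lam * LG\<^sup>2)"

definition noise_coeff :: "real \<Rightarrow> real \<Rightarrow> real \<Rightarrow> real" where
  "noise_coeff LF \<eta>F \<eta> = (1 + \<eta>F)\<^sup>2 / (2 * (1 - LF\<^sup>2 * \<eta> - \<eta>F)) * \<eta>"

lemma growth_coeff_nonneg: "0 \<le> \<eta> \<Longrightarrow> 0 \<le> lam \<Longrightarrow> 0 \<le> growth_coeff LG \<eta> lam"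
  unfolding growth_coeff_def by simp

lemma noise_coeff_nonneg: "0 \<le> \<eta> \<Longrightarrow> LF\<^sup>2 * \<eta> < 1 - \<eta>F \<Longrightarrow> 0 \<le> noise_coeff LF \<eta>F \<eta>"
  unfolding noise_coeff_def by simp

lemma inner_ge_if_tangential_cone:
  fixes a p w :: "'a::real_inner"
  assumes cone: "norm (w - (a + p)) \<le> \<eta>F * norm (a + p)" and "0 \<le> \<eta>F"
  shows "(1 - \<eta>F) * (norm a)\<^sup>2 - (1 + \<eta>F) * norm a * norm p \<le> a \<bullet> w"
proof -
  define r where "r = w - (a + p)"
  have "norm r \<le> \<eta>F * (norm a + norm p)"
    using cone \<open>0 \<le> \<eta>F\<close> unfolding r_def
    by (meson mult_left_mono norm_triangle_ineq order_trans)
  then have "- (norm a * (\<eta>F * (norm a + norm p))) \<le> a \<bullet> r"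
    using Cauchy_Schwarz_ineq2[of a r] mult_left_mono[of "norm r" _ "norm a"] by force
  moreover have "- (norm a * norm p) \<le> a \<bullet> p"
    using Cauchy_Schwarz_ineq2[of a p] by linarith
  moreover have "a \<bullet> w = (norm a)\<^sup>2 + a \<bullet> p + a \<bullet> r"
    unfolding r_def by (simp add: inner_simps power2_norm_eq_inner)
  ultimately show ?thesis by (simp add: algebra_simps power2_eq_square)
qed

lemma data_terms_le_noise_coeff:
  fixes \<eta> \<eta>F LF A P :: real
  assumes "0 < \<eta>" and "0 < 1 - LF\<^sup>2 * \<eta> - \<eta>F"
  shows "- 2 * \<eta> * ((1 - \<eta>F) * A\<^sup>2 - (1 + \<eta>F) * A * P) + \<eta>\<^sup>2 * (2 * LF\<^sup>2 * A\<^sup>2)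
    \<le> noise_coeff LF \<eta>F \<eta> * P\<^sup>2"
proof -
  define \<gamma> where "\<gamma> = 1 - LF\<^sup>2 * \<eta> - \<eta>F"
  define q where "q = (1 + \<eta>F) * P / (2 * \<gamma>)"
  have \<gamma>: "0 < \<gamma>" using assms unfolding \<gamma>_def by simp
  have q: "(1 + \<eta>F) * P = 2 * \<gamma> * q"
    using \<gamma> unfolding q_def by simp
  have "- 2 * \<eta> * ((1 - \<eta>F) * A\<^sup>2 - (1 + \<eta>F) * A * P) + \<eta>\<^sup>2 * (2 * LF\<^sup>2 * A\<^sup>2)
      = - 2 * \<eta> * \<gamma> * A\<^sup>2 + 2 * \<eta> * A * ((1 + \<eta>F) * P)"
    unfolding \<gamma>_def by (simp add: power2_eq_square algebra_simps)
  also have "\<dots> = - 2 * \<eta> * \<gamma> * A\<^sup>2 + 2 * \<eta> * A * (2 * \<gamma> * q)"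
    unfolding q ..
  also have "\<dots> = 2 * \<eta> * \<gamma> * q\<^sup>2 - 2 * \<eta> * \<gamma> * (A - q)\<^sup>2"
    by (simp add: power2_eq_square algebra_simps)
  also have "2 * \<eta> * \<gamma> * q\<^sup>2 = noise_coeff LF \<eta>F \<eta> * P\<^sup>2"
    using \<gamma> unfolding noise_coeff_def q_def \<gamma>_def[symmetric] by (simp add: power2_eq_square)
  finally show ?thesis using assms \<gamma> by simp
qed

lemma penalty_terms_le_growth_coeff:
  fixes \<eta> lam LG E B W :: real
  assumes "0 \<le> \<eta>" "0 \<le> lam" "0 \<le> LG" "0 \<le> E" "0 \<le> B" and B: "B \<le> LG * E + W"
  shows "2 * \<eta> * lam * (B * LG * E) + \<eta>\<^sup>2 * (2 * lam\<^sup>2 * LG\<^sup>2 * B\<^sup>2)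
    \<le> growth_coeff LG \<eta> lam * (E\<^sup>2 + W\<^sup>2)"
proof -
  define M where "M = max 1 (LG\<^sup>2)"
  have "LG\<^sup>2 * E\<^sup>2 \<le> M * E\<^sup>2" "W\<^sup>2 \<le> M * W\<^sup>2"
    unfolding M_def by (simp_all add: mult_right_mono mult_le_cancel_right1)
  then have M: "LG\<^sup>2 * E\<^sup>2 + W\<^sup>2 \<le> M * (E\<^sup>2 + W\<^sup>2)"
    by (simp add: distrib_left)
  have "B * LG * E \<le> (LG * E + W) * LG * E"
    using assms by (simp add: mult_right_mono)
  also have "\<dots> = (LG * E)\<^sup>2 + LG * E * W"
    by (simp add: power2_eq_square algebra_simps)
  also have "\<dots> \<le> 3/2 * (LG\<^sup>2 * E\<^sup>2 + W\<^sup>2)"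
  proof -
    have "2 * (LG * E * W) \<le> LG\<^sup>2 * E\<^sup>2 + W\<^sup>2"
      using sum_squares_bound[of "LG * E" W] by (simp add: power_mult_distrib mult.assoc)
    then show ?thesis using zero_le_power2[of W] unfolding power_mult_distrib by argo
  qed
  finally have cross: "B * LG * E \<le> 3/2 * (M * (E\<^sup>2 + W\<^sup>2))"
    using M by argo
  have "B\<^sup>2 \<le> (LG * E + W)\<^sup>2"
    using assms by (simp add: power_mono)
  also have "\<dots> \<le> 2 * (LG\<^sup>2 * E\<^sup>2 + W\<^sup>2)"
    using sum_squares_ge_zero[of "LG * E - W" 0] by (simp add: power2_eq_square algebra_simps)
  finally have square: "B\<^sup>2 \<le> 2 * (M * (E\<^sup>2 + W\<^sup>2))"
    using M by argo
  have "2 * \<eta> * lam * (B * LG * E) \<le> 2 * \<eta> * lam * (3/2 * (M * (E\<^sup>2 + W\<^sup>2)))"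
    using cross assms by (intro mult_left_mono) auto
  moreover have "(2 * \<eta>\<^sup>2 * lam\<^sup>2 * LG\<^sup>2) * B\<^sup>2
      \<le> (2 * \<eta>\<^sup>2 * lam\<^sup>2 * LG\<^sup>2) * (2 * (M * (E\<^sup>2 + W\<^sup>2)))"
    using square by (rule mult_left_mono) simp
  ultimately show ?thesis
    unfolding growth_coeff_def M_def[symmetric] by (simp add: power2_eq_square algebra_simps)
qed

lemma power2_norm_diff_scaleR_add_le:
  fixes e u v :: "'a::real_inner"
  shows "(norm (e - \<eta> *\<^sub>R (u + v)))\<^sup>2
    \<le> (norm e)\<^sup>2 - 2 * \<eta> * (u \<bullet> e) - 2 * \<eta> * (v \<bullet> e) + 2 * \<eta>\<^sup>2 * (norm u)\<^sup>2 + 2 * \<eta>\<^sup>2 * (norm v)\<^sup>2"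
proof -
  have "(norm (u + v))\<^sup>2 \<le> (norm u + norm v)\<^sup>2"
    by (simp add: norm_triangle_ineq power_mono)
  also have "\<dots> \<le> 2 * (norm u)\<^sup>2 + 2 * (norm v)\<^sup>2"
    using sum_squares_bound[of "norm u" "norm v"] by (simp add: power2_sum)
  finally have "\<eta>\<^sup>2 * (norm (u + v))\<^sup>2 \<le> \<eta>\<^sup>2 * (2 * (norm u)\<^sup>2 + 2 * (norm v)\<^sup>2)"
    by (rule mult_left_mono) simp
  moreover have "(norm (e - \<eta> *\<^sub>R (u + v)))\<^sup>2
      = (norm e)\<^sup>2 - 2 * \<eta> * (u \<bullet> e) - 2 * \<eta> * (v \<bullet> e) + \<eta>\<^sup>2 * (norm (u + v))\<^sup>2"
    unfolding power2_norm_eq_inner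
    by (simp add: inner_simps inner_commute power2_eq_square algebra_simps)
  ultimately show ?thesis by (simp add: algebra_simps)
qed

lemma norm_sq_adjoint_step_le:
  fixes A B :: "'a::{real_inner,complete_space} \<Rightarrow>\<^sub>L 'b::real_inner"
    and e :: 'a and a p b :: 'b
  assumes cone: "norm (A e - (a + p)) \<le> \<eta>F * norm (a + p)"
    and b_le: "norm b \<le> LG * norm e + W"
    and A_le: "norm A \<le> LF" and B_le: "norm B \<le> LG"
    and \<eta>F: "0 \<le> \<eta>F" and \<eta>: "0 < \<eta>" and lam: "0 < lam" and step: "LF\<^sup>2 * \<eta> < 1 - \<eta>F"
  shows "(norm (e - \<eta> *\<^sub>R (adjoint A a + lam *\<^sub>R adjoint B b)))\<^sup>2
    \<le> (1 + growth_coeff LG \<eta> lam) * (norm e)\<^sup>2 + growth_coeff LG \<eta> lam * W\<^sup>2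
       + noise_coeff LF \<eta>F \<eta> * (norm p)\<^sup>2"
proof -
  define u v where "u = adjoint A a" and "v = lam *\<^sub>R adjoint B b"
  have LG: "0 \<le> LG" using B_le norm_ge_zero order_trans by blast
  have u_e: "(1 - \<eta>F) * (norm a)\<^sup>2 - (1 + \<eta>F) * norm a * norm p \<le> u \<bullet> e"
    using inner_ge_if_tangential_cone[OF cone \<eta>F]
      adjoint_works_hilbert[OF blinfun.bounded_linear_right, of e A a]
    unfolding u_def by (simp add: inner_commute)
  have "norm u \<le> LF * norm a"
    using norm_adjoint_blinfun_le[of A a] mult_right_mono[OF A_le norm_ge_zero, of a]
    unfolding u_def by linarith
  then have u_sq: "(norm u)\<^sup>2 \<le> LF\<^sup>2 * (norm a)\<^sup>2"
    by (metis power_mono norm_ge_zero power_mult_distrib)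
  have "- 2 * \<eta> * (u \<bullet> e) \<le> - 2 * \<eta> * ((1 - \<eta>F) * (norm a)\<^sup>2 - (1 + \<eta>F) * norm a * norm p)"
    using mult_left_mono[OF u_e, of "2 * \<eta>"] \<eta> by simp
  moreover have "2 * \<eta>\<^sup>2 * (norm u)\<^sup>2 \<le> \<eta>\<^sup>2 * (2 * LF\<^sup>2 * (norm a)\<^sup>2)"
    using mult_left_mono[OF u_sq, of "2 * \<eta>\<^sup>2"] by (simp add: mult.assoc mult.left_commute)
  ultimately have data: "- 2 * \<eta> * (u \<bullet> e) + 2 * \<eta>\<^sup>2 * (norm u)\<^sup>2 \<le> noise_coeff LF \<eta>F \<eta> * (norm p)\<^sup>2"
    using data_terms_le_noise_coeff[OF \<eta>, of LF \<eta>F "norm a" "norm p"] step by simp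
  have "\<bar>b \<bullet> B e\<bar> \<le> norm b * (LG * norm e)"
    using Cauchy_Schwarz_ineq2[of b "B e"] norm_blinfun[of B e] B_le
    by (meson mult_left_mono mult_right_mono norm_ge_zero order_trans)
  then have v_e: "- (lam * (norm b * LG * norm e)) \<le> v \<bullet> e"
    using lam adjoint_works_hilbert[OF blinfun.bounded_linear_right, of e B b]
      mult_left_mono[of "- (norm b * LG * norm e)" "b \<bullet> B e" lam]
    unfolding v_def by (simp add: inner_commute mult.assoc)
  have "norm (adjoint B b) \<le> LG * norm b"
    using norm_adjoint_blinfun_le[of B b] mult_right_mono[OF B_le norm_ge_zero, of b] by linarith
  then have "norm v \<le> lam * LG * norm b"
    using lam unfolding v_def by (simp add: mult_left_mono mult.assoc)
  then have v_sq: "(norm v)\<^sup>2 \<le> lam\<^sup>2 * LG\<^sup>2 * (norm b)\<^sup>2"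
    by (metis power_mono norm_ge_zero power_mult_distrib)
  have "- 2 * \<eta> * (v \<bullet> e) \<le> 2 * \<eta> * lam * (norm b * LG * norm e)"
    using mult_left_mono[OF v_e, of "2 * \<eta>"] \<eta> by (simp add: algebra_simps)
  moreover have "2 * \<eta>\<^sup>2 * (norm v)\<^sup>2 \<le> \<eta>\<^sup>2 * (2 * lam\<^sup>2 * LG\<^sup>2 * (norm b)\<^sup>2)"
    using mult_left_mono[OF v_sq, of "2 * \<eta>\<^sup>2"] by (simp add: mult.assoc mult.left_commute)
  ultimately have penalty:
    "- 2 * \<eta> * (v \<bullet> e) + 2 * \<eta>\<^sup>2 * (norm v)\<^sup>2 \<le> growth_coeff LG \<eta> lam * ((norm e)\<^sup>2 + W\<^sup>2)"
    using penalty_terms_le_growth_coeff[OF less_imp_le[OF \<eta>] less_imp_le[OF lam] LG norm_ge_zero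
        norm_ge_zero b_le] by linarith
  show ?thesis
    using power2_norm_diff_scaleR_add_le[of e \<eta> u v] data penalty
    unfolding u_def v_def by (simp add: algebra_simps)
qed

lemma norm_sq_step_error_le:
  fixes F G :: "'a::{real_inner,complete_space} \<Rightarrow> 'b::real_inner"
    and F' G' :: "'a \<Rightarrow> 'a \<Rightarrow>\<^sub>L 'b"
  assumes S: "convex S" "x \<in> S" "x0 \<in> S"
    and sol: "F x0 = y0"
    and cone: "norm (F x0 - F x - F' x (x0 - x)) \<le> \<eta>F * norm (F x0 - F x)"
    and F'_le: "norm (F' x) \<le> LF"
    and G_deriv: "\<And>z. z \<in> S \<Longrightarrow> (G has_derivative blinfun_apply (G' z)) (at z within S)"
    and G'_le: "\<And>z. z \<in> S \<Longrightarrow> norm (G' z) \<le> LG"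
    and W: "norm (G x0 - y0) + norm (y - y0) \<le> W"
    and \<eta>F: "0 \<le> \<eta>F" and \<eta>: "0 < \<eta>" and lam: "0 < lam" and step: "LF\<^sup>2 * \<eta> < 1 - \<eta>F"
  shows "(norm (x - \<eta> *\<^sub>R (adjoint (F' x) (F x - y) + lam *\<^sub>R adjoint (G' x) (G x - y)) - x0))\<^sup>2
    \<le> (1 + growth_coeff LG \<eta> lam) * (norm (x - x0))\<^sup>2 + growth_coeff LG \<eta> lam * W\<^sup>2
       + noise_coeff LF \<eta>F \<eta> * (norm (y - y0))\<^sup>2"
proof -
  have "norm (G x - G x0) \<le> LG * norm (x - x0)"
    using S G_deriv G'_le by (intro differentiable_bound[of S]) (auto simp: norm_blinfun.rep_eq)
  moreover have "norm (G x - y) \<le> norm (G x - G x0) + (norm (G x0 - y0) + norm (y - y0))"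
    using norm_triangle_ineq4[of "G x - G x0 + (G x0 - y0)" "y - y0"]
      norm_triangle_ineq[of "G x - G x0" "G x0 - y0"] by simp
  ultimately have G_res: "norm (G x - y) \<le> LG * norm (x - x0) + W"
    using W by linarith
  have res: "(F x - y) + (y - y0) = F x - F x0"
    using sol by simp
  have linearization: "F' x (x - x0) - (F x - F x0) = F x0 - F x - F' x (x0 - x)"
    by (simp add: blinfun.diff_right algebra_simps)
  have F_cone: "norm (F' x (x - x0) - ((F x - y) + (y - y0))) \<le> \<eta>F * norm ((F x - y) + (y - y0))"
    unfolding res linearization norm_minus_commute[of "F x" "F x0"] by (rule cone)
  have "x - \<eta> *\<^sub>R (adjoint (F' x) (F x - y) + lam *\<^sub>R adjoint (G' x) (G x - y)) - x0
      = (x - x0) - \<eta> *\<^sub>R (adjoint (F' x) (F x - y) + lam *\<^sub>R adjoint (G' x) (G x - y))"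
    by (simp add: algebra_simps)
  then show ?thesis
    using norm_sq_adjoint_step_le[OF F_cone G_res F'_le G'_le[OF S(2)] \<eta>F \<eta> lam step] by (simp only:)
qed

lemma norm_le_sqrt_stack_norm:
  assumes "i \<in> {1..n}"
  shows "norm (v i) \<le> sqrt (real n) * stack_norm n v"
proof -
  have "norm (v i) \<le> sqrt (\<Sum>j\<in>{1..n}. (norm (v j))\<^sup>2)"
    using assms by (intro real_le_rsqrt member_le_sum) auto
  also have "\<dots> = sqrt (real n) * stack_norm n v"
    using assms unfolding stack_norm_def by (simp add: real_sqrt_mult[symmetric])
  finally show ?thesis .
qed

lemma discrete_gronwall_below:
  fixes u c b :: "nat \<Rightarrow> real"
  assumes step: "\<And>k. 1 \<le> k \<Longrightarrow> k < N \<Longrightarrow> u k \<le> R \<Longrightarrow> u (Suc k) \<le> (1 + c k) * u k + b k"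
    and c: "\<And>k. 1 \<le> k \<Longrightarrow> 0 \<le> c k" and b: "\<And>k. 1 \<le> k \<Longrightarrow> 0 \<le> b k"
    and u1: "0 \<le> u 1"
    and R: "exp (\<Sum>j=1..N. c j) * (u 1 + (\<Sum>j=1..N. b j)) \<le> R"
    and k: "1 \<le> k" "k \<le> N"
  shows "u k \<le> R"
proof -
  define B where "B k = exp (\<Sum>j=1..<k. c j) * (u 1 + (\<Sum>j=1..<k. b j))" for k
  have B_le: "B k \<le> R" if "k \<le> Suc N" for k
  proof -
    have sub: "{1..<k} \<subseteq> {1..N}" using that by auto
    have "(\<Sum>j=1..<k. c j) \<le> (\<Sum>j=1..N. c j)" "(\<Sum>j=1..<k. b j) \<le> (\<Sum>j=1..N. b j)"
      by (rule sum_mono2[OF _ sub], simp, simp add: c b)+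
    moreover have "0 \<le> u 1 + (\<Sum>j=1..<k. b j)"
      using u1 sum_nonneg[of "{1..<k}" b] b by simp
    ultimately have "B k \<le> exp (\<Sum>j=1..N. c j) * (u 1 + (\<Sum>j=1..N. b j))"
      unfolding B_def by (intro mult_mono) auto
    then show ?thesis using R by linarith
  qed
  have "u k \<le> B k" if "1 \<le> k" "k \<le> N" for k
    using that
  proof (induction k rule: dec_induct)
    case base
    then show ?case unfolding B_def by simp
  next
    case (step k)
    let ?S = "\<Sum>j=1..<k. c j"
    have S: "0 \<le> ?S" by (rule sum_nonneg) (simp add: c)
    have "0 \<le> B k"
      using u1 sum_nonneg[of "{1..<k}" b] b unfolding B_def by simp
    have "u (Suc k) \<le> (1 + c k) * u k + b k"
      using step B_le[of k] by (intro assms(1)) auto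
    also have "\<dots> \<le> exp (c k) * B k + exp (?S + c k) * b k"
    proof (rule add_mono)
      have "(1 + c k) * u k \<le> (1 + c k) * B k"
        using step c[of k] by (intro mult_left_mono) auto
      also have "\<dots> \<le> exp (c k) * B k"
        using mult_right_mono[OF exp_ge_add_one_self \<open>0 \<le> B k\<close>] .
      finally show "(1 + c k) * u k \<le> exp (c k) * B k" .
      have "1 \<le> exp (?S + c k)"
        using S c[of k] step(1) by simp
      then show "b k \<le> exp (?S + c k) * b k"
        using mult_right_mono[of 1 _ "b k"] b[of k] step(1) by simp
    qed
    also have "\<dots> = B (Suc k)"
      using step(1) by (simp add: B_def exp_add distrib_left)
    finally show ?case .
  qed
  then show ?thesis
    using k B_le[of k] by fastforce
qed

definition sgd_update ::
  "(nat \<Rightarrow> 'a::real_inner \<Rightarrow> 'b::real_inner) \<Rightarrow> (nat \<Rightarrow> 'a \<Rightarrow> 'a \<Rightarrow>\<^sub>L 'b) \<Rightarrow>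
   (nat \<Rightarrow> 'a \<Rightarrow> 'b) \<Rightarrow> (nat \<Rightarrow> 'a \<Rightarrow> 'a \<Rightarrow>\<^sub>L 'b) \<Rightarrow> (nat \<Rightarrow> 'b) \<Rightarrow> real \<Rightarrow> real \<Rightarrow> nat \<Rightarrow> 'a \<Rightarrow> 'a"
  where "sgd_update F F' G G' yd \<eta> lam i x =
    x - \<eta> *\<^sub>R (adjoint (F' i x) (F i x - yd i) + lam *\<^sub>R adjoint (G' i x) (G i x - yd i))"

lemma sgd_Suc:
  "1 \<le> k \<Longrightarrow> sgd F F' G G' yd eta lam idx x1 (Suc k)
     = sgd_update F F' G G' yd (eta k) (lam k) (idx k) (sgd F F' G G' yd eta lam idx x1 k)"
  by (simp add: sgd_update_def Let_def)

lemma sgd_update_lyapunov_le: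
  fixes F G :: "nat \<Rightarrow> 'a::{real_inner,complete_space} \<Rightarrow> 'b::real_inner"
    and F' G' :: "nat \<Rightarrow> 'a \<Rightarrow> 'a \<Rightarrow>\<^sub>L 'b"
  assumes i: "i \<in> {1..n}" and x: "x \<in> cball x0 r"
    and sol: "is_solution n D F y0 x0"
    and noise: "stack_norm n (\<lambda>i. yd i - y0 i) \<le> \<delta>"
    and G_x0: "stack_norm n (\<lambda>i. G i x0 - y0 i) \<le> C"
    and cone: "norm (F i x0 - F i x - F' i x (x0 - x)) \<le> \<eta>F * norm (F i x0 - F i x)"
    and F'_le: "norm (F' i x) \<le> LF"
    and G_deriv: "\<forall>z\<in>cball x0 r. (G i has_derivative blinfun_apply (G' i z)) (at z)"
    and G'_le: "\<forall>z\<in>cball x0 r. norm (G' i z) \<le> LG"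
    and \<eta>F: "0 \<le> \<eta>F" and \<eta>: "0 < \<eta>" and lam: "0 < lam" and step: "LF\<^sup>2 * \<eta> < 1 - \<eta>F"
  shows "(norm (sgd_update F F' G G' yd \<eta> lam i x - x0))\<^sup>2 + (C + \<delta>)\<^sup>2
    \<le> (1 + real n * growth_coeff LG \<eta> lam) * ((norm (x - x0))\<^sup>2 + (C + \<delta>)\<^sup>2)
       + real n * \<delta>\<^sup>2 * noise_coeff LF \<eta>F \<eta>"
proof -
  have x0: "x0 \<in> cball x0 r" using x by (auto intro: order_trans[OF zero_le_dist])
  have yd_i: "norm (yd i - y0 i) \<le> sqrt (real n) * \<delta>"
    using norm_le_sqrt_stack_norm[OF i, of "\<lambda>i. yd i - y0 i"] noise
    by (simp add: order_trans mult_left_mono)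
  have "norm (G i x0 - y0 i) \<le> sqrt (real n) * C"
    using norm_le_sqrt_stack_norm[OF i, of "\<lambda>i. G i x0 - y0 i"] G_x0
    by (simp add: order_trans mult_left_mono)
  then have W: "norm (G i x0 - y0 i) + norm (yd i - y0 i) \<le> sqrt (real n) * (C + \<delta>)"
    using yd_i by (simp add: distrib_left)
  have sq: "(sqrt (real n) * (C + \<delta>))\<^sup>2 = real n * (C + \<delta>)\<^sup>2"
    by (simp add: power_mult_distrib)
  have "(norm (sgd_update F F' G G' yd \<eta> lam i x - x0))\<^sup>2
      \<le> (1 + growth_coeff LG \<eta> lam) * (norm (x - x0))\<^sup>2
         + growth_coeff LG \<eta> lam * (sqrt (real n) * (C + \<delta>))\<^sup>2
         + noise_coeff LF \<eta>F \<eta> * (norm (yd i - y0 i))\<^sup>2"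
    unfolding sgd_update_def
  proof (rule norm_sq_step_error_le[where F = "F i" and F' = "F' i" and G = "G i" and G' = "G' i",
        OF convex_cball x x0 _ cone F'_le _ _ W \<eta>F \<eta> lam step])
    show "F i x0 = y0 i" using sol i unfolding is_solution_def by blast
  qed (use G_deriv G'_le in \<open>auto intro: has_derivative_at_withinI\<close>)
  note this[unfolded sq]
  moreover have "noise_coeff LF \<eta>F \<eta> * (norm (yd i - y0 i))\<^sup>2 \<le> noise_coeff LF \<eta>F \<eta> * (real n * \<delta>\<^sup>2)"
    using power_mono[OF yd_i norm_ge_zero, of 2] noise_coeff_nonneg[of \<eta> LF \<eta>F] \<eta> step
    by (intro mult_left_mono) (auto simp: power_mult_distrib)
  moreover have "growth_coeff LG \<eta> lam * (norm (x - x0))\<^sup>2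
      \<le> real n * growth_coeff LG \<eta> lam * (norm (x - x0))\<^sup>2"
  proof (rule mult_right_mono)
    have "1 \<le> real n" using i by simp
    from mult_right_mono[OF this growth_coeff_nonneg[of \<eta> lam LG]]
    show "growth_coeff LG \<eta> lam \<le> real n * growth_coeff LG \<eta> lam" using \<eta> lam by simp
  qed simp
  ultimately show ?thesis
    by (simp add: algebra_simps)
qed

theorem corollary3p2:
  fixes n :: nat
    and D :: "nat \<Rightarrow> 'a::{real_inner,complete_space} set"
    and F :: "nat \<Rightarrow> 'a \<Rightarrow> 'b::{real_inner,complete_space}"
    and F' :: "nat \<Rightarrow> 'a \<Rightarrow> 'a \<Rightarrow>\<^sub>L 'b"
    and G :: "nat \<Rightarrow> 'a \<Rightarrow> 'b"
    and G' :: "nat \<Rightarrow> 'a \<Rightarrow> 'a \<Rightarrow>\<^sub>L 'b"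
    and ydag yd :: "nat \<Rightarrow> 'b"
    and x1 xdag :: 'a
    and eta :: "nat \<Rightarrow> real"
    and lam :: "real \<Rightarrow> nat \<Rightarrow> real"
    and kstop :: "real \<Rightarrow> nat"
    and idx :: "nat \<Rightarrow> nat"
    and \<delta> rho LF LG etaF Cmin Cmax :: real
  assumes n_pos: "1 \<le> n"
    and delta_pos: "0 < \<delta>"
    and noise: "stack_norm n (\<lambda>i. yd i - ydag i) \<le> \<delta>"
    and xdag: "is_min_dist_solution n D F ydag x1 xdag"
    and idx_range: "\<forall>k\<ge>1. idx k \<in> {1..n}"
    and eta_pos: "\<forall>k\<ge>1. 0 < eta k"
    and lam_pos: "\<forall>k\<ge>1. 0 < lam \<delta> k"
    and rho_def: "rho = sqrt (exp (real n * (\<Sum>j=1..kstop \<delta>.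
                      2 * eta j * lam \<delta> j * max 1 (LG^2) * (3/2 + 2 * eta j * lam \<delta> j * LG^2)))
                    * ((norm (x1 - xdag))^2 + (Cmax + \<delta>)^2
                       + real n * \<delta>^2 * (\<Sum>j=1..kstop \<delta>.
                           (1 + etaF)^2 / (2 * (1 - LF^2 * eta j - etaF)) * eta j))
                    - (Cmax + \<delta>)^2)"
    and dom: "\<forall>i\<in>{1..n}. cball xdag rho \<subseteq> D i"
    and A1F: "\<forall>i\<in>{1..n}. \<forall>x\<in>cball xdag rho. (F i has_derivative blinfun_apply (F' i x)) (at x within D i)"
    and A1Fc: "\<forall>i\<in>{1..n}. continuous_on (cball xdag rho) (F' i)"
    and A1Fb: "\<forall>i\<in>{1..n}. \<forall>x\<in>cball xdag rho. norm (F' i x) \<le> LF"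
    and A1G: "\<forall>i\<in>{1..n}. \<forall>x\<in>cball xdag rho. (G i has_derivative blinfun_apply (G' i x)) (at x)"
    and A1Gc: "\<forall>i\<in>{1..n}. continuous_on (cball xdag rho) (G' i)"
    and A1Gb: "\<forall>i\<in>{1..n}. \<forall>x\<in>cball xdag rho. norm (G' i x) \<le> LG"
    and etaF: "0 \<le> etaF" "etaF < 1"
    and A2: "\<forall>i\<in>{1..n}. \<forall>x\<in>cball xdag rho. \<forall>x'\<in>cball xdag rho.
               norm (F i x - F i x' - F' i x' (x - x')) \<le> etaF * norm (F i x - F i x')"
    and Cpos: "0 < Cmin" "Cmin \<le> Cmax"
    and A3: "\<forall>xs\<in>cball xdag rho. is_solution n D F ydag xs \<longrightarrow>
               Cmin \<le> stack_norm n (\<lambda>i. G i xs - ydag i) \<and> stack_norm n (\<lambda>i. G i xs - ydag i) \<le> Cmax"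
    and P1: "\<forall>k\<ge>1. LF^2 * eta k < 1"
    and P2: "\<not> summable eta"
    and P3: "summable (\<lambda>k. eta k * lam \<delta> k)"
    and step: "\<forall>k\<ge>1. LF^2 * eta k < 1 - etaF"
    and lam_lim: "\<forall>k\<ge>1. ((\<lambda>d. lam d k) \<longlongrightarrow> lam 0 k) (at_right 0)"
    and kstop_lim: "filterlim kstop at_top (at_right 0)"
    and kstop_lim2: "((\<lambda>d. d^2 * (\<Sum>i=1..kstop d. eta i)) \<longlongrightarrow> 0) (at_right 0)"
  shows "\<forall>k. 1 \<le> k \<and> k \<le> kstop \<delta> \<longrightarrow>
           sgd F F' G G' yd eta (lam \<delta>) idx x1 k \<in> cball xdag rho"
proof -
  define c d where "c j = growth_coeff LG (eta j) (lam \<delta> j)"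
    and "d j = noise_coeff LF etaF (eta j)" for j
  define K where "K = (Cmax + \<delta>)\<^sup>2"
  define X where "X = sgd F F' G G' yd eta (lam \<delta>) idx x1"
  define u where "u k = (norm (X k - xdag))\<^sup>2 + K" for k
  define R where "R = exp (\<Sum>j=1..kstop \<delta>. real n * c j) * (u 1 + (\<Sum>j=1..kstop \<delta>. real n * \<delta>\<^sup>2 * d j))"
  have "rho = sqrt (R - K)"
    unfolding rho_def R_def u_def K_def c_def d_def growth_coeff_def noise_coeff_def X_def
    by (simp add: sum_distrib_left)
  then have in_ball: "X k \<in> cball xdag rho" if "u k \<le> R" for k
    using that unfolding u_def by (simp add: dist_norm norm_minus_commute real_le_rsqrt)
  have "u k \<le> R" if "1 \<le> k" "k \<le> kstop \<delta>" for k
  proof (rule discrete_gronwall_below[where c = "\<lambda>j. real n * c j" and b = "\<lambda>j. real n * \<delta>\<^sup>2 * d j"])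
    fix j assume j: "1 \<le> j" "j < kstop \<delta>" "u j \<le> R"
    have "X j \<in> cball xdag rho" using in_ball j(3) .
    moreover from this have "xdag \<in> cball xdag rho"
      by (auto intro: order_trans[OF zero_le_dist])
    ultimately show "u (Suc j) \<le> (1 + real n * c j) * u j + real n * \<delta>\<^sup>2 * d j"
      unfolding u_def K_def c_def d_def X_def sgd_Suc[OF j(1)]
      using xdag idx_range[rule_format, OF j(1)] noise A3 A2 A1Fb A1G A1Gb etaF eta_pos lam_pos step j(1)
      by (intro sgd_update_lyapunov_le) (auto simp: is_min_dist_solution_def)
  qed (use that eta_pos lam_pos step in \<open>auto simp: R_def c_def d_def u_def K_def
         intro!: growth_coeff_nonneg noise_coeff_nonneg mult_nonneg_nonneg\<close>)
  then show ?thesis using in_ball unfolding X_def by blast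
qed

end
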